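(* Let $k>0$ and $j\ge 0$ be integers and let $p\in\mathbb{C}[z,z^{-1},u]$. Let $\min_u$ be the minimal degree in $u$ of a monomial of $p$ and $\max_z$ the maximal degree in $z$ of a monomial of $p$ (if $p=0$, set $\min_u:=0$ and $\max_z:=-\infty$, so that $\max\{\max_z,0\}=0$). Let $E$ be the rank-$2$ holomorphic vector bundle on $Z_k$ with transition matrix $T=\begin{pmatrix} z^j & p(z,u)\\ 0 & z^{-j}\end{pmatrix}$ from $U$ to $V$. Let $(a,b)$ be a section of $E$ over $U$, with $a=\sum_{r,s\ge0}a_{rs}z^su^r$ and $b=\sum_{r,s\ge0}b_{rs}z^su^r$ holomorphic on $U$, such that both $z^ja+pb$ and $z^{-j}b$ are holomorphic functions of $(z^{-1},z^ku)$. Then for every $r\ge\min_u$, if $a_{rs}\neq0$ then \[0\le s\le \max\bigl\{k(r-\min_u)+j+\max\{\max_z,0\},\ kr-j\bigr\}.\]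
   Context: $Z_k$ denotes the total space of the line bundle $\mathcal{O}_{\mathbb{P}^1}(-k)$, covered by two charts $U\cong\mathbb{C}^2$ with coordinates $(z,u)$ and $V\cong\mathbb{C}^2$ with coordinates $(w,v)$, glued on $U\cap V=\{z\neq0\}$ by $w=z^{-1}$, $v=z^ku$. A holomorphic function on $U\cap V$ with Laurent expansion $\sum c_{rs}z^su^r$ is holomorphic in $(z^{-1},z^ku)$, i.e. extends holomorphically to $V$, exactly when $c_{rs}=0$ whenever $s>kr$. Sections over $U$ of the bundle with transition matrix $T$ are pairs $(a,b)$ of holomorphic functions on $U$; such a section extends over $V$ iff $\binom{z^ja+pb}{z^{-j}b}$ extends holomorphically to $V$. *)

theory Defs
  imports "HOL-Analysis.Analysis"
begin

text \<open>Holomorphic on all of U means the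
  double power series converges absolutely at every point of C^2.\<close>

definition holo_U :: "(nat \<Rightarrow> nat \<Rightarrow> complex) \<Rightarrow> bool" where
  "holo_U c \<longleftrightarrow> (\<forall>z u :: complex.
      (\<lambda>(r, s). norm (c r s * z ^ s * u ^ r)) summable_on (UNIV :: (nat \<times> nat) set))"

text \<open>Laurent polynomials p in C[z,z^{-1},u]: p r s is the coefficient of z^s u^r
  (r :: nat the u-degree, s :: int the z-degree), with finite support.\<close>

definition laurent_poly :: "(nat \<Rightarrow> int \<Rightarrow> complex) \<Rightarrow> bool" where
  "laurent_poly p \<longleftrightarrow> finite {(r, s). p r s \<noteq> 0}"

definition supp_lp :: "(nat \<Rightarrow> int \<Rightarrow> complex) \<Rightarrow> (nat \<times> int) set" where
  "supp_lp p = {(r, s). p r s \<noteq> 0}"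

definition min_u :: "(nat \<Rightarrow> int \<Rightarrow> complex) \<Rightarrow> nat" where
  "min_u p = (if supp_lp p = {} then 0 else Min (fst ` supp_lp p))"

definition max_z0 :: "(nat \<Rightarrow> int \<Rightarrow> complex) \<Rightarrow> int" where
  "max_z0 p = (if supp_lp p = {} then 0 else max (Max (snd ` supp_lp p)) 0)"

text \<open>Laurent coefficients (coefficient of z^s u^r, s :: int) of z^j a + p b.\<close>
definition first_comp :: "nat \<Rightarrow> (nat \<Rightarrow> int \<Rightarrow> complex) \<Rightarrow>
    (nat \<Rightarrow> nat \<Rightarrow> complex) \<Rightarrow> (nat \<Rightarrow> nat \<Rightarrow> complex) \<Rightarrow> nat \<Rightarrow> int \<Rightarrow> complex" where
  "first_comp j p a b r s =
     (if int j \<le> s then a r (nat (s - int j)) else 0)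
     + (\<Sum>(r1, s1) \<in> {(r1, s1). p r1 s1 \<noteq> 0 \<and> r1 \<le> r \<and> s1 \<le> s}.
          p r1 s1 * b (r - r1) (nat (s - s1)))"

text \<open>Laurent coefficients of z^{-j} b.\<close>
definition second_comp :: "nat \<Rightarrow> (nat \<Rightarrow> nat \<Rightarrow> complex) \<Rightarrow> nat \<Rightarrow> int \<Rightarrow> complex" where
  "second_comp j b r s = (if 0 \<le> s + int j then b r (nat (s + int j)) else 0)"

text \<open>A holomorphic function on U \<inter> V with Laurent coefficients c (of z^s u^r)
  extends holomorphically to V iff c r s = 0 whenever s > k r.\<close>
definition extends_V :: "nat \<Rightarrow> (nat \<Rightarrow> int \<Rightarrow> complex) \<Rightarrow> bool" where
  "extends_V k c \<longleftrightarrow> (\<forall>r s. int k * int r < s \<longrightarrow> c r s = 0)"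

end

theory Submission
  imports Defs
begin

text \<open>With s' = s + j, the coefficient of z^s' u^r in z^j a + p b is a_rs plus the
  products p_(r1,s1) b_(r-r1,s'-s1). Holomorphy of z^(-j) b on V kills b_rs for s > kr + j;
  as r1 \<ge> min_u and s1 \<le> max{max_z,0}, every product therefore vanishes once
  s > k(r - min_u) + j + max{max_z,0}. The coefficient is then a_rs itself, and holomorphy
  of z^j a + p b on V makes it vanish as soon as s + j > kr.\<close>

lemma min_u_le:
  assumes "laurent_poly p" and "p r s \<noteq> 0"
  shows "min_u p \<le> r"
proof -
  have "(r, s) \<in> supp_lp p" using assms(2) by (simp add: supp_lp_def)
  moreover have "finite (supp_lp p)"
    using assms(1) by (simp add: laurent_poly_def supp_lp_def)
  ultimately show ?thesis
    unfolding min_u_def by (auto intro!: Min_le rev_image_eqI)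
qed

lemma le_max_z0:
  assumes "laurent_poly p" and "p r s \<noteq> 0"
  shows "s \<le> max_z0 p"
proof -
  have "(r, s) \<in> supp_lp p" using assms(2) by (simp add: supp_lp_def)
  moreover have "finite (supp_lp p)"
    using assms(1) by (simp add: laurent_poly_def supp_lp_def)
  ultimately have "s \<le> Max (snd ` supp_lp p)"
    by (auto intro!: Max_ge rev_image_eqI)
  then show ?thesis
    using \<open>(r, s) \<in> supp_lp p\<close> unfolding max_z0_def by auto
qed

lemma extends_V_second_comp_coeff_eq_0:
  assumes "extends_V k (second_comp j b)" and "int k * int r + int j < int s"
  shows "b r s = 0"
proof -
  have "second_comp j b r (int s - int j) = 0"
    using assms unfolding extends_V_def by (simp add: algebra_simps)
  then show ?thesis by (simp add: second_comp_def)
qed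

lemma first_comp_shift:
  "first_comp j p a b r (int s + int j) =
     a r s + (\<Sum>(r1, s1) \<in> {(r1, s1). p r1 s1 \<noteq> 0 \<and> r1 \<le> r \<and> s1 \<le> int s + int j}.
                p r1 s1 * b (r - r1) (nat (int s + int j - s1)))"
  by (simp add: first_comp_def)

lemma first_comp_eq_coeff:
  assumes "laurent_poly p" and "extends_V k (second_comp j b)"
    and s_large: "int k * (int r - int (min_u p)) + int j + max_z0 p < int s"
  shows "first_comp j p a b r (int s + int j) = a r s"
proof -
  have "b (r - r1) (nat (int s + int j - s1)) = 0"
    if "p r1 s1 \<noteq> 0" and "r1 \<le> r" for r1 s1
  proof -
    have "int k * int (r - r1) \<le> int k * (int r - int (min_u p))"
      using min_u_le[OF assms(1) \<open>p r1 s1 \<noteq> 0\<close>] \<open>r1 \<le> r\<close>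
      by (intro mult_left_mono) auto
    moreover have "s1 \<le> max_z0 p" using le_max_z0[OF assms(1) \<open>p r1 s1 \<noteq> 0\<close>] .
    moreover have "0 \<le> int k * int (r - r1)" by simp
    ultimately have "int k * int (r - r1) + int j < int (nat (int s + int j - s1))"
      using s_large by linarith
    then show ?thesis using extends_V_second_comp_coeff_eq_0[OF assms(2)] by blast
  qed
  then show ?thesis by (simp add: first_comp_shift sum.neutral case_prod_unfold)
qed

theorem mainTheorem4:
  fixes k j :: nat
    and p :: "nat \<Rightarrow> int \<Rightarrow> complex"
    and a b :: "nat \<Rightarrow> nat \<Rightarrow> complex"
  assumes "k > 0"
    and "laurent_poly p"
    and "holo_U a" and "holo_U b"
    and "extends_V k (first_comp j p a b)"
    and "extends_V k (second_comp j b)"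
  shows "\<forall>r s. r \<ge> min_u p \<longrightarrow> a r s \<noteq> 0 \<longrightarrow>
           0 \<le> int s \<and>
           int s \<le> max (int k * (int r - int (min_u p)) + int j + max_z0 p)
                         (int k * int r - int j)"
proof (intro allI impI conjI)
  fix r s
  assume "a r s \<noteq> 0"
  show "0 \<le> int s" by simp
  show "int s \<le> max (int k * (int r - int (min_u p)) + int j + max_z0 p)
                     (int k * int r - int j)"
  proof (rule ccontr)
    assume "\<not> ?thesis"
    then have "first_comp j p a b r (int s + int j) = a r s"
      and "int k * int r < int s + int j"
      using first_comp_eq_coeff[OF assms(2,6)] by auto
    with assms(5) \<open>a r s \<noteq> 0\<close> show False
      unfolding extends_V_def by auto
  qed
qed

end
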